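(* Let $\mathcal{S}=(U,\mathcal{P})$ be a relational schema with finite domain $U$, let $D=D^n\cup D^x$ be a database instance, let $\mathcal{Q}$ be a Boolean first-order query, and let $\tau$ be an endogenous tuple. (a) If $X_\tau$ occurs positively in $\Phi_{\mathcal{Q}}(D)$, then $\mathcal{E}^D_{\tau,\mathcal{Q}}=r_{\mathcal{Q},X_\tau}\cdot\frac{\sigma_{\mathcal{Q}}}{\sigma_{X_\tau}}$. (b) If $X_\tau$ occurs negatively in $\Phi_{\mathcal{Q}}(D)$, then $\mathcal{E}^D_{\tau,\mathcal{Q}}=-\,r_{\mathcal{Q},X_\tau}\cdot\frac{\sigma_{\mathcal{Q}}}{\sigma_{X_\tau}}$. Here $\mathcal{Q}$ and $X_\tau$ are regarded as Bernoulli random variables on the space $\Omega$ of truth assignments to $\mathit{Var}(\Phi_{\mathcal{Q}}(D))$ with the uniform distribution conditioned on the exogenous variables taking their fixed values (positive exogenous variables equal to $1$, negative ones equal to $0$), $\sigma_{\mathcal{Q}},\sigma_{X_\tau}$ are their standard deviations, and $r_{\mathcal{Q},X_\tau}$ is their Pearson correlation coefficient.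
   Context: A database instance is a finite set of ground atoms (tuples) partitioned as $D=D^n\cup D^x$ into endogenous and exogenous tuples. Lineage: for every potential tuple $\tau$ introduce a propositional variable $X_\tau$; $\Phi_{\mathcal{Q}}$ is defined inductively by $\Phi_\tau:=X_\tau$, $\Phi_{a=a}:=\mathit{true}$, $\Phi_{a=b}:=\mathit{false}$ for distinct constants, $\Phi_{\mathcal{Q}_1\wedge\mathcal{Q}_2}:=\Phi_{\mathcal{Q}_1}\wedge\Phi_{\mathcal{Q}_2}$, $\Phi_{\mathcal{Q}_1\vee\mathcal{Q}_2}:=\Phi_{\mathcal{Q}_1}\vee\Phi_{\mathcal{Q}_2}$, $\Phi_{\exists x\,\mathcal{Q}}:=\bigvee_{c\in U}\Phi_{\mathcal{Q}[c/x]}$, $\Phi_{\neg\mathcal{Q}}:=\neg\Phi_{\mathcal{Q}}$. With negation only in front of variables, the $D$-lineage $\Phi_{\mathcal{Q}}(D)$ is obtained by replacing each positive occurrence of $X_\tau$ with $\tau\notin D$ by $\mathit{false}$ and each literal $\neg X_\tau$ with $\tau\in D$ by $\mathit{false}$. Standing assumptions: no variable occurs both positively and negatively in $\Phi_{\mathcal{Q}}(D)$, and every $\tau\notin D$ occurring negatively is regarded as endogenous. Exogenous variables (of tuples in $D^x$) split into positive ones $\mathit{Var}^{x,+}$ and negative ones $\mathit{Var}^{x,-}$. $\Omega$ is the set of all assignments $\sigma:\mathit{Var}(\Phi_{\mathcal{Q}}(D))\to\{0,1\}$ with uniform distribution; $\mathcal{Q}(\sigma)=1$ iff $\sigma\models\Phi_{\mathcal{Q}}(D)$,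 and $X_\tau(\sigma)=\sigma(X_\tau)$; $\mathit{do}(X=x):=\{\sigma:\sigma(X)=x\}$. For endogenous $\tau$, $E(\mathcal{Q}\mid\mathit{do}(X_\tau=v))$ is the conditional expectation of $\mathcal{Q}$ given $\mathit{do}(X_\tau=v)$ intersected with $\mathit{do}(X_{\tau'}=1)$ for all $X_{\tau'}\in\mathit{Var}^{x,+}$ and $\mathit{do}(X_{\tau'}=0)$ for all $X_{\tau'}\in\mathit{Var}^{x,-}$. The causal effect is $\mathcal{E}^D_{\tau,\mathcal{Q}}:=E(\mathcal{Q}\mid\mathit{do}(X_\tau=v))-E(\mathcal{Q}\mid\mathit{do}(X_\tau=1-v))$ with $v=1$ if $\tau\in D$ and $v=0$ otherwise. The Pearson correlation coefficient is $r_{X,Y}=\mathrm{Cov}(X,Y)/(\sigma_X\sigma_Y)$. *)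

theory Defs
  imports "HOL-Probability.Probability"
begin

type_synonym ('r,'c) tuple = "'r \<times> 'c list"

text \<open>A relational schema S = (U, P): a finite domain U of constants and relation names with
  arities (relation names not in P have arity None).\<close>
record ('r,'c) schema =
  dom :: "'c set"
  arity :: "'r \<Rightarrow> nat option"

definition wf_schema :: "('r,'c) schema \<Rightarrow> bool" where
  "wf_schema S \<longleftrightarrow> finite (dom S)"

definition wf_tuple :: "('r,'c) schema \<Rightarrow> ('r,'c) tuple \<Rightarrow> bool" where
  "wf_tuple S t \<longleftrightarrow> arity S (fst t) = Some (length (snd t)) \<and> set (snd t) \<subseteq> dom S"

definition wf_instance :: "('r,'c) schema \<Rightarrow> ('r,'c) tuple set \<Rightarrow> ('r,'c) tuple set \<Rightarrow> bool" where
  "wf_instance S Dn Dx \<longleftrightarrow> finite Dn \<and> finite Dx \<and> Dn \<inter> Dx = {} \<and>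
     (\<forall>t \<in> Dn \<union> Dx. wf_tuple S t)"

datatype ('v,'c) fterm = TVar 'v | TConst 'c

datatype ('r,'v,'c) fo =
    Atom 'r "('v,'c) fterm list"
  | Eq "('v,'c) fterm" "('v,'c) fterm"
  | Conj "('r,'v,'c) fo" "('r,'v,'c) fo"
  | Disj "('r,'v,'c) fo" "('r,'v,'c) fo"
  | Exists 'v "('r,'v,'c) fo"
  | Neg "('r,'v,'c) fo"

fun fv_term :: "('v,'c) fterm \<Rightarrow> 'v set" where
  "fv_term (TVar x) = {x}"
| "fv_term (TConst c) = {}"

fun fv :: "('r,'v,'c) fo \<Rightarrow> 'v set" where
  "fv (Atom R ts) = (\<Union>t\<in>set ts. fv_term t)"
| "fv (Eq s t) = fv_term s \<union> fv_term t"
| "fv (Conj a b) = fv a \<union> fv b"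
| "fv (Disj a b) = fv a \<union> fv b"
| "fv (Exists x a) = fv a - {x}"
| "fv (Neg a) = fv a"

fun consts_term :: "('v,'c) fterm \<Rightarrow> 'c set" where
  "consts_term (TVar x) = {}"
| "consts_term (TConst c) = {c}"

fun wf_query :: "('r,'c) schema \<Rightarrow> ('r,'v,'c) fo \<Rightarrow> bool" where
  "wf_query S (Atom R ts) \<longleftrightarrow> arity S R = Some (length ts) \<and> (\<Union>t\<in>set ts. consts_term t) \<subseteq> dom S"
| "wf_query S (Eq s t) \<longleftrightarrow> consts_term s \<union> consts_term t \<subseteq> dom S"
| "wf_query S (Conj a b) \<longleftrightarrow> wf_query S a \<and> wf_query S b"
| "wf_query S (Disj a b) \<longleftrightarrow> wf_query S a \<and> wf_query S b"
| "wf_query S (Exists x a) \<longleftrightarrow> wf_query S a"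
| "wf_query S (Neg a) \<longleftrightarrow> wf_query S a"

definition boolean_query :: "('r,'c) schema \<Rightarrow> ('r,'v,'c) fo \<Rightarrow> bool" where
  "boolean_query S Q \<longleftrightarrow> wf_query S Q \<and> fv Q = {}"

datatype 'x pform =
    PTrue | PFalse
  | PLit bool 'x       \<comment> \<open>\<open>PLit True x\<close> = X, \<open>PLit False x\<close> = \<not>X\<close>
  | PAnd "'x pform list"
  | POr "'x pform list"

fun psat :: "('x \<Rightarrow> bool) \<Rightarrow> 'x pform \<Rightarrow> bool" where
  "psat \<sigma> PTrue = True"
| "psat \<sigma> PFalse = False"
| "psat \<sigma> (PLit b x) = (if b then \<sigma> x else \<not> \<sigma> x)"
| "psat \<sigma> (PAnd fs) = (\<forall>f\<in>set fs. psat \<sigma> f)"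
| "psat \<sigma> (POr fs) = (\<exists>f\<in>set fs. psat \<sigma> f)"

fun pos_vars :: "'x pform \<Rightarrow> 'x set" and neg_vars :: "'x pform \<Rightarrow> 'x set" where
  "pos_vars PTrue = {}" | "pos_vars PFalse = {}"
| "pos_vars (PLit b x) = (if b then {x} else {})"
| "pos_vars (PAnd fs) = (\<Union>f\<in>set fs. pos_vars f)"
| "pos_vars (POr fs) = (\<Union>f\<in>set fs. pos_vars f)"
| "neg_vars PTrue = {}" | "neg_vars PFalse = {}"
| "neg_vars (PLit b x) = (if b then {} else {x})"
| "neg_vars (PAnd fs) = (\<Union>f\<in>set fs. neg_vars f)"
| "neg_vars (POr fs) = (\<Union>f\<in>set fs. neg_vars f)"

definition pvars :: "'x pform \<Rightarrow> 'x set" where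
  "pvars f = pos_vars f \<union> neg_vars f"

fun eval_term :: "('v \<Rightarrow> 'c) \<Rightarrow> ('v,'c) fterm \<Rightarrow> 'c" where
  "eval_term env (TVar x) = env x"
| "eval_term env (TConst c) = c"

text \<open>\<open>lin U p Q env\<close> is the lineage \<open>\<Phi>_Q\<close> of \<open>Q\<close> (with its free variables instantiated by
  \<open>env\<close>, i.e. \<open>Q[env]\<close>) if \<open>p\<close>, and of \<open>\<not>Q\<close> if \<not>p, with negations pushed in front of the
  variables by De Morgan's laws. \<open>\<exists>x\<close> becomes the disjunction over all \<open>c \<in> U\<close>
  (enumerated in sorted order).\<close>
fun lin :: "'c::linorder set \<Rightarrow> bool \<Rightarrow> ('r,'v,'c) fo \<Rightarrow> ('v \<Rightarrow> 'c) \<Rightarrow> ('r,'c) tuple pform" where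
  "lin U p (Atom R ts) env = PLit p (R, map (eval_term env) ts)"
| "lin U p (Eq s t) env =
     (if (eval_term env s = eval_term env t) = p then PTrue else PFalse)"
| "lin U p (Conj a b) env =
     (if p then PAnd [lin U p a env, lin U p b env] else POr [lin U p a env, lin U p b env])"
| "lin U p (Disj a b) env =
     (if p then POr [lin U p a env, lin U p b env] else PAnd [lin U p a env, lin U p b env])"
| "lin U p (Exists x a) env =
     (if p then POr (map (\<lambda>c. lin U p a (env(x := c))) (sorted_list_of_set U))
      else PAnd (map (\<lambda>c. lin U p a (env(x := c))) (sorted_list_of_set U)))"
| "lin U p (Neg a) env = lin U (\<not> p) a env"

text \<open>Lineage of a Boolean query (the environment is irrelevant for sentences).\<close>
definition lineage :: "('r,'c::linorder) schema \<Rightarrow> ('r,'v,'c) fo \<Rightarrow> ('r,'c) tuple pform" where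
  "lineage S Q = lin (dom S) True Q (\<lambda>_. undefined)"

fun dlin :: "'x set \<Rightarrow> 'x pform \<Rightarrow> 'x pform" where
  "dlin D PTrue = PTrue"
| "dlin D PFalse = PFalse"
| "dlin D (PLit b x) = (if b \<and> x \<notin> D then PFalse else if \<not> b \<and> x \<in> D then PFalse else PLit b x)"
| "dlin D (PAnd fs) = PAnd (map (dlin D) fs)"
| "dlin D (POr fs) = POr (map (dlin D) fs)"

definition D_lineage :: "('r,'c::linorder) schema \<Rightarrow> ('r,'c) tuple set \<Rightarrow> ('r,'v,'c) fo \<Rightarrow> ('r,'c) tuple pform" where
  "D_lineage S D Q = dlin D (lineage S Q)"

text \<open>\<open>\<Omega>\<close>: all assignments to the variables of \<open>\<Phi>\<close> (identified with functions that are
  False outside \<open>pvars \<Phi>\<close>).\<close>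
definition Omega :: "'x pform \<Rightarrow> ('x \<Rightarrow> bool) set" where
  "Omega \<Phi> = {\<sigma>. \<forall>x. x \<notin> pvars \<Phi> \<longrightarrow> \<sigma> x = False}"

definition exo_pos :: "'x set \<Rightarrow> 'x pform \<Rightarrow> 'x set" where
  "exo_pos Dx \<Phi> = pos_vars \<Phi> \<inter> Dx"

definition exo_neg :: "'x set \<Rightarrow> 'x pform \<Rightarrow> 'x set" where
  "exo_neg Dx \<Phi> = neg_vars \<Phi> \<inter> Dx"

definition Omega_x :: "'x set \<Rightarrow> 'x pform \<Rightarrow> ('x \<Rightarrow> bool) set" where
  "Omega_x Dx \<Phi> = {\<sigma> \<in> Omega \<Phi>. (\<forall>x \<in> exo_pos Dx \<Phi>. \<sigma> x) \<and> (\<forall>x \<in> exo_neg Dx \<Phi>. \<not> \<sigma> x)}"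

definition do_set :: "'x \<Rightarrow> bool \<Rightarrow> ('x \<Rightarrow> bool) set" where
  "do_set X v = {\<sigma>. \<sigma> X = v}"

definition rv_Q :: "'x pform \<Rightarrow> ('x \<Rightarrow> bool) \<Rightarrow> real" where
  "rv_Q \<Phi> \<sigma> = of_bool (psat \<sigma> \<Phi>)"

definition rv_X :: "'x \<Rightarrow> ('x \<Rightarrow> bool) \<Rightarrow> real" where
  "rv_X X \<sigma> = of_bool (\<sigma> X)"

text \<open>\<open>E(Q | do(X_\<tau> = v))\<close>, with the exogenous variables fixed as well (uniform distribution).\<close>
definition E_do :: "'x set \<Rightarrow> 'x pform \<Rightarrow> 'x \<Rightarrow> bool \<Rightarrow> real" where
  "E_do Dx \<Phi> X v = measure_pmf.expectation (pmf_of_set (Omega_x Dx \<Phi> \<inter> do_set X v)) (rv_Q \<Phi>)"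

definition causal_effect ::
  "('r,'c::linorder) schema \<Rightarrow> ('r,'c) tuple set \<Rightarrow> ('r,'c) tuple set \<Rightarrow> ('r,'c) tuple \<Rightarrow> ('r,'v,'c) fo \<Rightarrow> real" where
  "causal_effect S Dn Dx \<tau> Q =
     (let \<Phi> = D_lineage S (Dn \<union> Dx) Q; v = (\<tau> \<in> Dn \<union> Dx)
      in E_do Dx \<Phi> \<tau> v - E_do Dx \<Phi> \<tau> (\<not> v))"

definition P_x :: "'x set \<Rightarrow> 'x pform \<Rightarrow> ('x \<Rightarrow> bool) pmf" where
  "P_x Dx \<Phi> = pmf_of_set (Omega_x Dx \<Phi>)"

definition covariance :: "'a pmf \<Rightarrow> ('a \<Rightarrow> real) \<Rightarrow> ('a \<Rightarrow> real) \<Rightarrow> real" where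
  "covariance P f g = measure_pmf.expectation P (\<lambda>\<omega>. (f \<omega> - measure_pmf.expectation P f) * (g \<omega> - measure_pmf.expectation P g))"

definition std_dev :: "'a pmf \<Rightarrow> ('a \<Rightarrow> real) \<Rightarrow> real" where
  "std_dev P f = sqrt (measure_pmf.variance P f)"

definition pearson :: "'a pmf \<Rightarrow> ('a \<Rightarrow> real) \<Rightarrow> ('a \<Rightarrow> real) \<Rightarrow> real" where
  "pearson P f g = covariance P f g / (std_dev P f * std_dev P g)"

end

theory Submission
  imports Defs
begin

text \<open>Once the exogenous variables are fixed, the causal effect is the difference
  \<open>m\<^sub>1 - m\<^sub>0\<close> of the conditional means of \<open>Q\<close> on the events \<open>X\<^sub>\<tau> = 1\<close> and
  \<open>X\<^sub>\<tau> = 0\<close>, taken in the order dictated by whether \<open>\<tau> \<in> D\<close>. For a Bernoulli variable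
  \<open>X\<close> with \<open>P(X = 1) = p\<close> one has \<open>Cov(Q, X) = p(1 - p)(m\<^sub>1 - m\<^sub>0)\<close> and
  \<open>Var X = p(1 - p)\<close>, hence \<open>r\<^sub>Q\<^sub>,\<^sub>X \<sigma>\<^sub>Q / \<sigma>\<^sub>X = Cov(Q, X) / Var X = m\<^sub>1 - m\<^sub>0\<close>.
  In the \<open>D\<close>-lineage a positive occurrence of \<open>X\<^sub>\<tau>\<close> forces \<open>\<tau> \<in> D\<close> and a negative one
  \<open>\<tau> \<notin> D\<close>, which yields the sign.\<close>

lemma expectation_pmf_of_set_cong:
  fixes h k :: "'a \<Rightarrow> real"
  assumes "finite B" "B \<noteq> {}" "\<And>x. x \<in> B \<Longrightarrow> h x = k x"
  shows "measure_pmf.expectation (pmf_of_set B) h = measure_pmf.expectation (pmf_of_set B) k"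
  using assms by (simp add: integral_pmf_of_set[OF assms(2,1)] cong: sum.cong)

lemma expectation_pmf_of_set_const:
  fixes h :: "'a \<Rightarrow> real"
  assumes "finite B" "B \<noteq> {}" "\<And>x. x \<in> B \<Longrightarrow> h x = c"
  shows "measure_pmf.expectation (pmf_of_set B) h = c"
  using expectation_pmf_of_set_cong[OF assms] by simp

lemma expectation_pmf_of_set_partition:
  fixes h :: "'a \<Rightarrow> real"
  assumes fin: "finite A" and ne1: "{x\<in>A. g x} \<noteq> {}" and ne0: "{x\<in>A. \<not> g x} \<noteq> {}"
  defines "p \<equiv> card {x\<in>A. g x} / card A"
  shows "measure_pmf.expectation (pmf_of_set A) h
     = p * measure_pmf.expectation (pmf_of_set {x\<in>A. g x}) h
       + (1 - p) * measure_pmf.expectation (pmf_of_set {x\<in>A. \<not> g x}) h"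
proof -
  let ?A1 = "{x\<in>A. g x}" and ?A0 = "{x\<in>A. \<not> g x}"
  have fin10: "finite ?A1" "finite ?A0" and ne: "A \<noteq> {}" using fin ne1 by auto
  have part: "A = ?A1 \<union> ?A0" "?A1 \<inter> ?A0 = {}" by auto
  have card: "real (card A) = card ?A1 + card ?A0"
    using card_Un_disjoint[OF fin10 part(2)] part(1) by simp
  have "card ?A1 > 0" using fin10 ne1 by (simp add: card_gt_0_iff)
  hence "1 - p = card ?A0 / card A"
    by (simp add: p_def card field_simps)
  moreover have "sum h A = sum h ?A1 + sum h ?A0"
    using sum.union_disjoint[OF fin10 part(2)] part(1) by simp
  ultimately show ?thesis
    using fin10 ne1 ne0 ne fin
    by (simp add: integral_pmf_of_set p_def add_divide_distrib)
qed

lemma covariance_indicator_pmf_of_set: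
  fixes f :: "'a \<Rightarrow> real"
  assumes fin: "finite A" and ne1: "{x\<in>A. g x} \<noteq> {}" and ne0: "{x\<in>A. \<not> g x} \<noteq> {}"
  defines "p \<equiv> card {x\<in>A. g x} / card A"
  shows "covariance (pmf_of_set A) f (\<lambda>x. of_bool (g x))
     = p * (1 - p) * (measure_pmf.expectation (pmf_of_set {x\<in>A. g x}) f
                      - measure_pmf.expectation (pmf_of_set {x\<in>A. \<not> g x}) f)"
proof -
  let ?A1 = "{x\<in>A. g x}" and ?A0 = "{x\<in>A. \<not> g x}"
  let ?E = "\<lambda>B h. measure_pmf.expectation (pmf_of_set B) (h :: 'a \<Rightarrow> real)"
  have fin10: "finite ?A1" "finite ?A0" using fin by auto
  note partition = expectation_pmf_of_set_partition[OF fin ne1 ne0, folded p_def]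
  have lin: "?E B (\<lambda>x. (f x - c) * d) = (?E B f - c) * d" if "finite B" "B \<noteq> {}" for B c d
    using that by (simp add: integrable_measure_pmf_finite)
  have "?E ?A1 (\<lambda>x. of_bool (g x)) = 1" "?E ?A0 (\<lambda>x. of_bool (g x)) = 0"
    by (auto intro!: expectation_pmf_of_set_const fin10 ne1 ne0)
  hence EX: "?E A (\<lambda>x. of_bool (g x)) = p"
    by (simp add: partition)
  define m where "m = ?E A f"
  have on1: "?E ?A1 (\<lambda>x. (f x - m) * (of_bool (g x) - p)) = (?E ?A1 f - m) * (1 - p)"
  proof -
    have "?E ?A1 (\<lambda>x. (f x - m) * (of_bool (g x) - p)) = ?E ?A1 (\<lambda>x. (f x - m) * (1 - p))"
      by (rule expectation_pmf_of_set_cong[OF fin10(1) ne1]) simp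
    also have "\<dots> = (?E ?A1 f - m) * (1 - p)" by (rule lin[OF fin10(1) ne1])
    finally show ?thesis .
  qed
  have on0: "?E ?A0 (\<lambda>x. (f x - m) * (of_bool (g x) - p)) = (?E ?A0 f - m) * (- p)"
  proof -
    have "?E ?A0 (\<lambda>x. (f x - m) * (of_bool (g x) - p)) = ?E ?A0 (\<lambda>x. (f x - m) * (- p))"
      by (rule expectation_pmf_of_set_cong[OF fin10(2) ne0]) simp
    also have "\<dots> = (?E ?A0 f - m) * (- p)" by (rule lin[OF fin10(2) ne0])
    finally show ?thesis .
  qed
  have "covariance (pmf_of_set A) f (\<lambda>x. of_bool (g x))
      = p * ((?E ?A1 f - m) * (1 - p)) + (1 - p) * ((?E ?A0 f - m) * (- p))"
    unfolding covariance_def EX m_def[symmetric] partition[of "\<lambda>x. (f x - m) * (of_bool (g x) - p)"]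
      on1 on0 ..
  then show ?thesis by (simp add: algebra_simps)
qed

lemma variance_indicator_pmf_of_set:
  assumes fin: "finite A" and ne1: "{x\<in>A. g x} \<noteq> {}" and ne0: "{x\<in>A. \<not> g x} \<noteq> {}"
  defines "p \<equiv> card {x\<in>A. g x} / card A"
  shows "measure_pmf.variance (pmf_of_set A) (\<lambda>x. of_bool (g x)) = p * (1 - p)"
proof -
  have "measure_pmf.variance (pmf_of_set A) (\<lambda>x. of_bool (g x))
      = covariance (pmf_of_set A) (\<lambda>x. of_bool (g x)) (\<lambda>x. of_bool (g x))"
    by (simp add: covariance_def power2_eq_square)
  also have "\<dots> = p * (1 - p) * (1 - 0)"
    unfolding covariance_indicator_pmf_of_set[OF assms(1-3), folded p_def]
    using fin ne1 ne0 by (subst (1 2) expectation_pmf_of_set_const) auto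
  finally show ?thesis by simp
qed

lemma covariance_pmf_of_set_eq_0_if_variance_eq_0:
  fixes f g :: "'a \<Rightarrow> real"
  assumes fin: "finite A" and ne: "A \<noteq> {}"
    and var: "measure_pmf.variance (pmf_of_set A) f = 0"
  shows "covariance (pmf_of_set A) f g = 0"
proof -
  define m where "m = measure_pmf.expectation (pmf_of_set A) f"
  have "(\<Sum>x\<in>A. (f x - m)\<^sup>2) = 0"
    using var fin ne by (simp add: integral_pmf_of_set[OF ne fin] m_def)
  hence "f x = m" if "x \<in> A" for x
    using fin that by (subst (asm) sum_nonneg_eq_0_iff) auto
  thus ?thesis
    unfolding covariance_def m_def[symmetric]
    by (intro expectation_pmf_of_set_const[OF fin ne]) simp
qed

lemma pearson_mult_std_ratio_pmf_of_set:
  fixes f g :: "'a \<Rightarrow> real"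
  assumes fin: "finite A" and ne: "A \<noteq> {}"
    and var: "measure_pmf.variance (pmf_of_set A) g > 0"
  shows "pearson (pmf_of_set A) f g * (std_dev (pmf_of_set A) f / std_dev (pmf_of_set A) g)
       = covariance (pmf_of_set A) f g / measure_pmf.variance (pmf_of_set A) g"
proof (cases "std_dev (pmf_of_set A) f = 0")
  case True
  hence "measure_pmf.variance (pmf_of_set A) f = 0" by (simp add: std_dev_def)
  thus ?thesis using True covariance_pmf_of_set_eq_0_if_variance_eq_0[OF fin ne] by (simp add: pearson_def)
next
  case False
  have "std_dev (pmf_of_set A) g ^ 2 = measure_pmf.variance (pmf_of_set A) g"
    using var by (simp add: std_dev_def)
  moreover have "std_dev (pmf_of_set A) g \<noteq> 0" using var by (simp add: std_dev_def)
  ultimately show ?thesis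
    using False by (simp add: pearson_def power2_eq_square field_simps)
qed

lemma pearson_mult_std_ratio_indicator_pmf_of_set:
  fixes f :: "'a \<Rightarrow> real"
  assumes fin: "finite A" and ne1: "{x\<in>A. g x} \<noteq> {}" and ne0: "{x\<in>A. \<not> g x} \<noteq> {}"
  shows "pearson (pmf_of_set A) f (\<lambda>x. of_bool (g x))
           * (std_dev (pmf_of_set A) f / std_dev (pmf_of_set A) (\<lambda>x. of_bool (g x)))
       = measure_pmf.expectation (pmf_of_set {x\<in>A. g x}) f
         - measure_pmf.expectation (pmf_of_set {x\<in>A. \<not> g x}) f"
proof -
  define p where "p = card {x\<in>A. g x} / card A"
  have "card {x\<in>A. g x} < card A"
    using ne0 fin by (intro psubset_card_mono) auto
  moreover have "card {x\<in>A. g x} > 0" using ne1 fin by (simp add: card_gt_0_iff)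
  ultimately have "0 < p" "p < 1" by (auto simp: p_def)
  have var: "measure_pmf.variance (pmf_of_set A) (\<lambda>x. of_bool (g x)) = p * (1 - p)"
    unfolding p_def by (rule variance_indicator_pmf_of_set[OF assms])
  have cov: "covariance (pmf_of_set A) f (\<lambda>x. of_bool (g x))
      = p * (1 - p) * (measure_pmf.expectation (pmf_of_set {x\<in>A. g x}) f
                      - measure_pmf.expectation (pmf_of_set {x\<in>A. \<not> g x}) f)"
    unfolding p_def by (rule covariance_indicator_pmf_of_set[OF assms])
  have "A \<noteq> {}" using ne1 by blast
  with \<open>0 < p\<close> \<open>p < 1\<close> have "pearson (pmf_of_set A) f (\<lambda>x. of_bool (g x))
           * (std_dev (pmf_of_set A) f / std_dev (pmf_of_set A) (\<lambda>x. of_bool (g x)))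
       = covariance (pmf_of_set A) f (\<lambda>x. of_bool (g x))
         / measure_pmf.variance (pmf_of_set A) (\<lambda>x. of_bool (g x))"
    by (intro pearson_mult_std_ratio_pmf_of_set[OF fin]) (simp_all add: var)
  with \<open>0 < p\<close> \<open>p < 1\<close> show ?thesis by (simp add: var cov)
qed

lemma pos_vars_dlin: "pos_vars (dlin D f) \<subseteq> D"
  and neg_vars_dlin: "neg_vars (dlin D f) \<inter> D = {}"
  by (induction f) auto

lemma finite_pvars: "finite (pvars f)"
proof -
  have "finite (pos_vars f) \<and> finite (neg_vars f)" by (induction f) auto
  thus ?thesis by (simp add: pvars_def)
qed

lemma finite_Omega: "finite (Omega \<Phi>)"
proof -
  have "finite {\<sigma>. \<forall>x. (x \<in> pvars \<Phi> \<longrightarrow> \<sigma> x \<in> UNIV) \<and> (x \<notin> pvars \<Phi> \<longrightarrow> \<sigma> x = False)}"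
    by (intro finite_set_of_finite_funs finite_pvars) simp
  thus ?thesis by (simp add: Omega_def)
qed

lemma finite_Omega_x: "finite (Omega_x Dx \<Phi>)"
  by (rule finite_subset[OF _ finite_Omega]) (auto simp: Omega_x_def)

lemma Omega_x_do_set_nonempty:
  assumes "\<tau> \<notin> Dx" and "\<tau> \<in> pvars \<Phi>" and "pos_vars \<Phi> \<inter> neg_vars \<Phi> = {}"
  shows "Omega_x Dx \<Phi> \<inter> do_set \<tau> v \<noteq> {}"
proof -
  have "(\<lambda>x. x \<in> exo_pos Dx \<Phi>)(\<tau> := v) \<in> Omega_x Dx \<Phi> \<inter> do_set \<tau> v"
    using assms unfolding Omega_x_def Omega_def exo_pos_def exo_neg_def pvars_def do_set_def by auto
  thus ?thesis by blast
qed

lemma E_do_True_minus_False: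
  assumes "\<tau> \<notin> Dx" and "\<tau> \<in> pvars \<Phi>" and "pos_vars \<Phi> \<inter> neg_vars \<Phi> = {}"
  shows "E_do Dx \<Phi> \<tau> True - E_do Dx \<Phi> \<tau> False
       = pearson (P_x Dx \<Phi>) (rv_Q \<Phi>) (rv_X \<tau>)
           * (std_dev (P_x Dx \<Phi>) (rv_Q \<Phi>) / std_dev (P_x Dx \<Phi>) (rv_X \<tau>))"
proof -
  have do_True: "Omega_x Dx \<Phi> \<inter> do_set \<tau> True = {\<sigma> \<in> Omega_x Dx \<Phi>. \<sigma> \<tau>}"
    and do_False: "Omega_x Dx \<Phi> \<inter> do_set \<tau> False = {\<sigma> \<in> Omega_x Dx \<Phi>. \<not> \<sigma> \<tau>}"
    by (auto simp: do_set_def)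
  have rv_X: "rv_X \<tau> = (\<lambda>\<sigma>. of_bool (\<sigma> \<tau>))" by (simp add: rv_X_def fun_eq_iff)
  show ?thesis
    unfolding E_do_def P_x_def do_True do_False rv_X
    by (intro pearson_mult_std_ratio_indicator_pmf_of_set[symmetric] finite_Omega_x
        Omega_x_do_set_nonempty[OF assms, of True, unfolded do_True]
        Omega_x_do_set_nonempty[OF assms, of False, unfolded do_False])
qed

theorem proposition3:
  fixes S :: "('r, 'c::linorder) schema"
    and Dn Dx :: "('r,'c) tuple set"
    and Q :: "('r,'v,'c) fo"
    and \<tau> :: "('r,'c) tuple"
  defines "\<Phi> \<equiv> D_lineage S (Dn \<union> Dx) Q"
  defines "P \<equiv> P_x Dx \<Phi>"
  assumes schema: "wf_schema S"
    and inst: "wf_instance S Dn Dx"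
    and query: "boolean_query S Q"
    and endo: "\<tau> \<notin> Dx"
    and no_mixed: "pos_vars \<Phi> \<inter> neg_vars \<Phi> = {}"
  shows "(\<tau> \<in> pos_vars \<Phi> \<longrightarrow>
            causal_effect S Dn Dx \<tau> Q
              = pearson P (rv_Q \<Phi>) (rv_X \<tau>) * (std_dev P (rv_Q \<Phi>) / std_dev P (rv_X \<tau>)))
       \<and> (\<tau> \<in> neg_vars \<Phi> \<longrightarrow>
            causal_effect S Dn Dx \<tau> Q
              = - (pearson P (rv_Q \<Phi>) (rv_X \<tau>) * (std_dev P (rv_Q \<Phi>) / std_dev P (rv_X \<tau>))))"
proof -
  have effect: "causal_effect S Dn Dx \<tau> Q
      = E_do Dx \<Phi> \<tau> (\<tau> \<in> Dn \<union> Dx) - E_do Dx \<Phi> \<tau> (\<tau> \<notin> Dn \<union> Dx)"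
    by (simp add: causal_effect_def \<Phi>_def Let_def)
  have lineage_vars: "pos_vars \<Phi> \<subseteq> Dn \<union> Dx" "neg_vars \<Phi> \<inter> (Dn \<union> Dx) = {}"
    unfolding \<Phi>_def D_lineage_def by (rule pos_vars_dlin, rule neg_vars_dlin)
  note diff = E_do_True_minus_False[OF endo _ no_mixed, folded P_def]
  show ?thesis
  proof (intro conjI impI)
    assume "\<tau> \<in> pos_vars \<Phi>"
    with lineage_vars have "\<tau> \<in> Dn \<union> Dx" "\<tau> \<in> pvars \<Phi>" by (auto simp: pvars_def)
    with effect diff show "causal_effect S Dn Dx \<tau> Q
        = pearson P (rv_Q \<Phi>) (rv_X \<tau>) * (std_dev P (rv_Q \<Phi>) / std_dev P (rv_X \<tau>))"
      by (simp del: Un_iff)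
  next
    assume "\<tau> \<in> neg_vars \<Phi>"
    with lineage_vars have "\<tau> \<notin> Dn \<union> Dx" "\<tau> \<in> pvars \<Phi>" by (auto simp: pvars_def)
    with effect diff show "causal_effect S Dn Dx \<tau> Q
        = - (pearson P (rv_Q \<Phi>) (rv_X \<tau>) * (std_dev P (rv_Q \<Phi>) / std_dev P (rv_X \<tau>)))"
      by (simp del: Un_iff)
  qed
qed

end
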